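(* Let $A \in \mathbb{R}^{n\times n}$ and let $Q, D \in \mathbb{R}^{n\times n}$ be symmetric. Assume that the pair $(A,D)$ is stabilizable and the pair $(Q,A)$ is detectable, and let $P$ be the unique stabilizing solution of the algebraic Riccati equation $A^T X + XA + Q - XDX = 0$. Let $$H = \begin{bmatrix} A & -D \\ -Q & -A^T\end{bmatrix}\in\mathbb{R}^{2n\times 2n},\qquad J=\begin{bmatrix}\mathbf{0}_n & I_n\\ -I_n & \mathbf{0}_n\end{bmatrix},$$ and let $(\lambda_i, v_i)$ be a right eigenpair of $H$ with $\lambda_i<0$ real and $v_i\in\mathbb{R}^{2n}$ a unit vector ($Hv_i=\lambda_i v_i$, $\|v_i\|=1$). Define $p_i = (J + I_{2n}) v_i$ and $q_i = J v_i$. Then for any $\Delta\lambda_i \in \mathbb{R}$ there exist $\tilde A \in \mathbb{R}^{n\times n}$ and symmetric $\tilde Q, \tilde D \in \mathbb{R}^{n\times n}$ such that $$H + \Delta\lambda_i\left(v_i p_i^T - q_i q_i^T\right) = \begin{bmatrix} \tilde A & -\tilde D \\ -\tilde Q & -\tilde A^T\end{bmatrix}.$$ Moreover, if $\Delta\lambda_i < -\lambda_i$, then $P$ is the unique stabilizing solution of $\tilde A^T X + X\tilde A + \tilde Q - X\tilde D X = 0$.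
   Context: A solution $X$ of the algebraic Riccati equation $A^TX+XA+Q-XDX=0$ is called stabilizing if $A - DX$ is Hurwitz (all eigenvalues have negative real part); a stabilizing solution, if it exists, is unique (and symmetric). Under the stabilizability/detectability assumption such a solution exists. A right eigenpair $(\lambda,v)$ of a matrix $M$ means $Mv=\lambda v$ with $v\neq 0$. *)

theory Defs
  imports "HOL-Analysis.Analysis"
begin

text \<open>Real n x n matrices are rendered as real^'n^'n; 2n x 2n matrices are indexed
by the disjoint sum 'n + 'n (first block = Inl, second block = Inr).\<close>

definition cmat :: "real^'n^'m \<Rightarrow> complex^'n^'m" where
  "cmat M = (\<chi> i j. complex_of_real (M $ i $ j))"

definition hurwitz :: "real^'n^'n \<Rightarrow> bool" where
  "hurwitz M \<longleftrightarrow> (\<forall>(l::complex) (v::complex^'n). v \<noteq> 0 \<and> cmat M *v v = l *s v \<longrightarrow> Re l < 0)"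

definition stabilizable :: "real^'n^'n \<Rightarrow> real^'n^'n \<Rightarrow> bool" where
  "stabilizable A D \<longleftrightarrow> (\<exists>K::real^'n^'n. hurwitz (A - D ** K))"

definition detectable :: "real^'n^'n \<Rightarrow> real^'n^'n \<Rightarrow> bool" where
  "detectable Q A \<longleftrightarrow> (\<exists>L::real^'n^'n. hurwitz (A - L ** Q))"

definition symmetric_mat :: "real^'n^'n \<Rightarrow> bool" where
  "symmetric_mat M \<longleftrightarrow> transpose M = M"

definition are_residual :: "real^'n^'n \<Rightarrow> real^'n^'n \<Rightarrow> real^'n^'n \<Rightarrow> real^'n^'n \<Rightarrow> real^'n^'n" where
  "are_residual A Q D X = transpose A ** X + X ** A + Q - X ** D ** X"

definition stabilizing_solution :: "real^'n^'n \<Rightarrow> real^'n^'n \<Rightarrow> real^'n^'n \<Rightarrow> real^'n^'n \<Rightarrow> bool" where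
  "stabilizing_solution A Q D X \<longleftrightarrow> are_residual A Q D X = 0 \<and> hurwitz (A - D ** X)"

definition block_mat :: "real^'n^'n \<Rightarrow> real^'n^'n \<Rightarrow> real^'n^'n \<Rightarrow> real^'n^'n \<Rightarrow> real^('n+'n)^('n+'n)" where
  "block_mat M11 M12 M21 M22 = (\<chi> i j. case i of
      Inl a \<Rightarrow> (case j of Inl b \<Rightarrow> M11 $ a $ b | Inr b \<Rightarrow> M12 $ a $ b)
    | Inr a \<Rightarrow> (case j of Inl b \<Rightarrow> M21 $ a $ b | Inr b \<Rightarrow> M22 $ a $ b))"

definition hamiltonian :: "real^'n^'n \<Rightarrow> real^'n^'n \<Rightarrow> real^'n^'n \<Rightarrow> real^('n+'n)^('n+'n)" where
  "hamiltonian A Q D = block_mat A (- D) (- Q) (- transpose A)"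

definition Jmat :: "real^('n::finite+'n)^('n+'n)" where
  "Jmat = block_mat 0 (mat 1) (- mat 1) 0"

definition outer :: "real^'m \<Rightarrow> real^'n \<Rightarrow> real^'n^'m" where
  "outer v w = (\<chi> i j. v $ i * w $ j)"

end

theory Submission
  imports Defs "HOL-Computational_Algebra.Fundamental_Theorem_Algebra"
begin

(* Since P is stabilizing and lam < 0, the eigenvector v = (x, y) of the Hamiltonian lies in the
   graph of P: y = P x, and x is an eigenvector of the closed-loop matrix A - D P for lam.
   The rank-two update of H is again Hamiltonian, leaves the Riccati residual of P unchanged, and
   changes the closed-loop matrix into A - D P + dlam x w\<^sup>T with w = x + P y, so w\<^sup>T x = 1.
   By Brauer's theorem this rank-one update only moves the eigenvalue lam to lam + dlam; hence P
   remains stabilizing when lam + dlam < 0. Stabilizing solutions are unique because the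
   difference of two of them solves a Sylvester equation whose coefficients are Hurwitz. *)

lemma matrix_add_rdistrib: "((A::'a::comm_ring_1^'n^'m) + B) ** C = A ** C + B ** C"
  by (simp add: matrix_matrix_mult_def vec_eq_iff sum.distrib distrib_right)

lemma matrix_diff_rdistrib: "((A::'a::comm_ring_1^'n^'m) - B) ** C = A ** C - B ** C"
  by (simp add: matrix_matrix_mult_def vec_eq_iff sum_subtractf left_diff_distrib)

lemma matrix_diff_ldistrib: "(A::'a::comm_ring_1^'n^'m) ** (B - C) = A ** B - A ** C"
  by (simp add: matrix_matrix_mult_def vec_eq_iff sum_subtractf right_diff_distrib)

lemma matrix_uminus_mult: "(- (A::'a::comm_ring_1^'n^'m)) ** B = - (A ** B)"
  by (simp add: matrix_matrix_mult_def vec_eq_iff sum_negf)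

lemma matrix_mult_uminus: "(A::'a::comm_ring_1^'n^'m) ** (- B) = - (A ** B)"
  by (simp add: matrix_matrix_mult_def vec_eq_iff sum_negf)

lemma transpose_add: "transpose ((A::'a::comm_ring_1^'n^'m) + B) = transpose A + transpose B"
  by (simp add: transpose_def vec_eq_iff)

lemma transpose_diff: "transpose ((A::'a::comm_ring_1^'n^'m) - B) = transpose A - transpose B"
  by (simp add: transpose_def vec_eq_iff)

lemma transpose_uminus: "transpose (- (A::'a::comm_ring_1^'n^'m)) = - transpose A"
  by (simp add: transpose_def vec_eq_iff)

lemma transpose_zero [simp]: "transpose (0::'a::comm_ring_1^'n^'m) = 0"
  by (simp add: transpose_def vec_eq_iff)

lemmas matrix_ring_simps = matrix_add_ldistrib matrix_add_rdistrib matrix_diff_ldistrib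
  matrix_diff_rdistrib matrix_uminus_mult matrix_mult_uminus matrix_mul_assoc
  matrix_transpose_mul transpose_add transpose_diff transpose_uminus

lemma mat_matrix_mult: "mat c ** (M::'a::comm_ring_1^'n^'m) = (\<chi> i j. c * M$i$j)"
  by (simp add: matrix_matrix_mult_def mat_def vec_eq_iff if_distrib if_distribR
      cong: if_cong)

lemma matrix_mult_mat: "(M::'a::comm_ring_1^'n^'m) ** mat c = (\<chi> i j. c * M$i$j)"
  by (simp add: matrix_matrix_mult_def mat_def vec_eq_iff if_distrib if_distribR sum.delta'
      mult.commute cong: if_cong)

lemma mat_matrix_mult_commute: "mat c ** (M::'a::comm_ring_1^'n^'n) = M ** mat c"
  by (simp add: mat_matrix_mult matrix_mult_mat)

lemma matrix_mult_mat_left_commute: "(K::'a::comm_ring_1^'n^'n) ** (mat c ** M) = mat c ** (K ** M)"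
  by (metis mat_matrix_mult_commute matrix_mul_assoc)

lemma mat_add: "mat (a + b) = (mat a + mat b :: 'a::comm_ring_1^'n^'n)"
  by (simp add: mat_def vec_eq_iff)

lemma mat_mult: "mat (a * b) = (mat a ** mat b :: 'a::comm_ring_1^'n^'n)"
  by (simp add: mat_matrix_mult) (simp add: mat_def vec_eq_iff)

lemma mat_uminus: "mat (- a) = (- mat a :: 'a::comm_ring_1^'n^'n)"
  by (simp add: mat_def vec_eq_iff)

lemma mat_matrix_vector_mult: "mat c *v (x::'a::comm_ring_1^'n) = c *s x"
  by (simp add: matrix_vector_mult_def mat_def vec_eq_iff if_distrib if_distribR
      cong: if_cong)

lemma matrix_vector_mult_smult: "(M::'a::comm_semiring_1^'n^'m) *v (c *s x) = c *s (M *v x)"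
  by (simp add: matrix_vector_mult_def vec_eq_iff sum_distrib_left mult_ac)

lemma transpose_outer: "transpose (outer a b) = outer b a"
  by (simp add: outer_def transpose_def vec_eq_iff mult_ac)

lemma outer_add_left: "outer (a + b) c = outer a c + outer b c"
  by (simp add: outer_def vec_eq_iff algebra_simps)

lemma outer_add_right: "outer a (b + c) = outer a b + outer a c"
  by (simp add: outer_def vec_eq_iff algebra_simps)

lemma outer_scaleR_left: "outer (c *\<^sub>R a) b = c *\<^sub>R outer a b"
  by (simp add: outer_def vec_eq_iff)

lemma outer_matrix_mult: "outer a b ** (M::real^'n^'n) = outer a (transpose M *v b)"
  by (simp add: outer_def matrix_matrix_mult_def matrix_vector_mult_def transpose_def vec_eq_iff
      sum_distrib_left mult_ac)

lemma matrix_mult_outer: "(M::real^'n^'n) ** outer a b = outer (M *v a) b"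
  by (simp add: outer_def matrix_matrix_mult_def matrix_vector_mult_def vec_eq_iff
      sum_distrib_left sum_distrib_right mult_ac)

lemma invertible_iff_trivial_kernel:
  fixes M :: "'a::field^'n^'n"
  shows "invertible M \<longleftrightarrow> (\<forall>x. M *v x = 0 \<longrightarrow> x = 0)"
  by (simp add: invertible_left_inverse matrix_left_invertible_ker)

lemma invertible_transpose_iff:
  fixes M :: "'a::field^'n^'n"
  shows "invertible (transpose M) \<longleftrightarrow> invertible M"
  by (metis invertible_left_inverse invertible_right_inverse left_invertible_transpose)

lemma invertible_uminus:
  fixes M :: "'a::field^'n^'n"
  assumes "invertible M"
  shows "invertible (- M)"
proof -
  obtain B where "M ** B = mat 1" "B ** M = mat 1"
    using assms invertible_def by blast
  then show ?thesis
    unfolding invertible_def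
    by (intro exI[of _ "- B"]) (simp add: matrix_uminus_mult matrix_mult_uminus)
qed

section \<open>Matrix polynomials and the Sylvester equation\<close>

definition poly_mat :: "complex poly \<Rightarrow> complex^'n^'n \<Rightarrow> complex^'n^'n" where
  "poly_mat p K = fold_coeffs (\<lambda>a M. mat a + K ** M) p 0"

lemma poly_mat_0 [simp]: "poly_mat 0 K = 0"
  by (simp add: poly_mat_def)

lemma poly_mat_pCons: "poly_mat (pCons a p) K = mat a + K ** poly_mat p K"
  by (cases "a = 0 \<and> p = 0") (auto simp: poly_mat_def)

lemma poly_mat_add: "poly_mat (p + q) K = poly_mat p K + poly_mat q K"
proof (induction p arbitrary: q rule: pCons_induct)
  case (pCons a p)
  then show ?case
    by (cases q rule: pCons_cases)
      (simp add: poly_mat_pCons mat_add matrix_add_ldistrib algebra_simps)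
qed simp

lemma poly_mat_smult: "poly_mat (smult c p) K = mat c ** poly_mat p K"
proof (induction p rule: pCons_induct)
  case (pCons a p)
  then show ?case
    by (simp add: poly_mat_pCons mat_mult matrix_add_ldistrib matrix_mult_mat_left_commute)
qed simp

lemma poly_mat_mult: "poly_mat (p * q) K = poly_mat p K ** poly_mat q K"
  by (induction p rule: pCons_induct)
    (simp_all add: poly_mat_pCons poly_mat_add poly_mat_smult matrix_add_rdistrib matrix_mul_assoc)

lemma poly_mat_diff: "poly_mat (p - q) K = poly_mat p K - poly_mat q K"
  using poly_mat_add[of p "- q" K] poly_mat_smult[of "- 1" q K]
  by (simp add: mat_uminus matrix_uminus_mult)

lemma poly_mat_sum: "poly_mat (\<Sum>i\<in>S. f i) K = (\<Sum>i\<in>S. poly_mat (f i) K)"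
  by (induction S rule: infinite_finite_induct) (auto simp: poly_mat_add)

lemma poly_mat_linear: "poly_mat [:- mu, 1:] K = K - mat mu"
  by (simp add: poly_mat_pCons mat_uminus)

lemma poly_mat_monom_of_real:
  "poly_mat (monom (complex_of_real r) i) K = r *\<^sub>R poly_mat (monom 1 i) K"
  using poly_mat_smult[of "complex_of_real r" "monom 1 i" K]
  by (simp add: smult_monom mat_matrix_mult vec_eq_iff) (simp add: scaleR_conv_of_real)

lemma exists_annihilating_poly: "\<exists>p. p \<noteq> 0 \<and> poly_mat p (K::complex^'n^'n) = 0"
proof -
  define pw where "pw i = poly_mat (monom 1 i) K" for i
  define m where "m = DIM(complex^'n^'n)"
  show ?thesis
  proof (cases "inj_on pw {..m}")
    case False
    then obtain i j where ij: "i \<noteq> j" "pw i = pw j"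
      unfolding inj_on_def by auto
    let ?p = "monom (1::complex) i - monom 1 j"
    have "coeff ?p i = 1"
      using ij by simp
    then have "?p \<noteq> 0"
      by (metis coeff_0 zero_neq_one)
    moreover have "poly_mat ?p K = 0"
      using ij by (simp add: poly_mat_diff pw_def)
    ultimately show ?thesis by blast
  next
    case True
    let ?S = "pw ` {..m}"
    have "card ?S = m + 1"
      using True by (simp add: card_image)
    then have "dependent ?S"
      by (intro dependent_biggerset) (simp add: m_def)
    then obtain u where u: "\<exists>v\<in>?S. u v \<noteq> 0" "(\<Sum>v\<in>?S. u v *\<^sub>R v) = 0"
      using real_vector.dependent_finite[of ?S] by blast
    define p where "p = (\<Sum>i\<le>m. monom (complex_of_real (u (pw i))) i)"
    from u(1) obtain i where "i \<le> m" "u (pw i) \<noteq> 0"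
      by blast
    then have "coeff p i \<noteq> 0"
      by (simp add: p_def coeff_sum)
    then have "p \<noteq> 0"
      by auto
    moreover have "poly_mat p K = (\<Sum>i\<le>m. u (pw i) *\<^sub>R pw i)"
      unfolding p_def poly_mat_sum poly_mat_monom_of_real pw_def ..
    moreover have "(\<Sum>i\<le>m. u (pw i) *\<^sub>R pw i) = (\<Sum>v\<in>?S. u v *\<^sub>R v)"
      using sum.reindex[OF True, of "\<lambda>v. u v *\<^sub>R v"] by simp
    ultimately show ?thesis
      using u(2) by auto
  qed
qed

lemma invertible_mult_right_eq_0:
  fixes M W :: "'a::field^'n^'n"
  assumes "invertible M" and "W ** M = 0"
  shows "W = 0"
proof -
  obtain B where "M ** B = mat 1"
    using assms(1) invertible_def by blast
  then have "W = (W ** M) ** B"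
    by (simp add: matrix_mul_assoc[symmetric])
  with assms(2) show ?thesis
    by simp
qed

lemma invertible_mult_left_eq_0:
  fixes M W :: "'a::field^'n^'n"
  assumes "invertible M" and "M ** W = 0"
  shows "W = 0"
proof -
  obtain B where "B ** M = mat 1"
    using assms(1) invertible_def by blast
  then have "W = B ** (M ** W)"
    by (simp add: matrix_mul_assoc)
  with assms(2) show ?thesis
    by simp
qed

(* Induction on the degree of p: whichever of K - mu and N - mu is invertible, for a root mu
   of p, cancels the linear factor. *)
lemma sylvester_poly_mat_eq_0:
  fixes N K Z :: "complex^'n^'n"
  assumes NZ: "N ** Z = Z ** K"
    and disjoint: "\<And>mu. invertible (K - mat mu) \<or> invertible (N - mat mu)"
    and "p \<noteq> 0" and "Z ** poly_mat p K = 0"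
  shows "Z = 0"
  using assms(3,4)
proof (induction "degree p" arbitrary: p rule: less_induct)
  case less
  show ?case
  proof (cases "degree p = 0")
    case True
    then obtain c where "p = [:c:]" "c \<noteq> 0"
      using less.prems(1) by (metis degree_0_id pCons_0_0)
    with less.prems(2) have "Z ** mat c ** mat (inverse c) = 0"
      by (simp add: poly_mat_pCons)
    with \<open>c \<noteq> 0\<close> show "Z = 0"
      by (simp add: matrix_mul_assoc[symmetric] mat_mult[symmetric])
  next
    case False
    then obtain mu where "poly p mu = 0"
      by (metis constant_degree fundamental_theorem_of_algebra)
    then obtain r where pr: "p = [:- mu, 1:] * r"
      by (metis dvdE poly_eq_0_iff_dvd)
    with less.prems(1) have "r \<noteq> 0"
      by auto
    then have "degree p = degree r + 1"
      unfolding pr by (subst degree_mult_eq) auto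
    then have "degree r < degree p"
      by simp
    have left: "poly_mat p K = (K - mat mu) ** poly_mat r K"
      unfolding pr poly_mat_mult poly_mat_linear ..
    have right: "poly_mat p K = poly_mat r K ** (K - mat mu)"
      unfolding pr mult.commute[of "[:- mu, 1:]"] poly_mat_mult poly_mat_linear ..
    define W where "W = Z ** poly_mat r K"
    have "W ** (K - mat mu) = 0"
      using less.prems(2) by (simp add: W_def right matrix_mul_assoc)
    moreover have "(N - mat mu) ** Z = Z ** (K - mat mu)"
      using NZ by (simp add: matrix_diff_rdistrib matrix_diff_ldistrib mat_matrix_mult_commute)
    then have "(N - mat mu) ** W = 0"
      using less.prems(2) by (simp add: W_def left matrix_mul_assoc)
    ultimately have "W = 0"
      using disjoint invertible_mult_right_eq_0 invertible_mult_left_eq_0 by blast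
    then show "Z = 0"
      using less.hyps[OF \<open>degree r < degree p\<close> \<open>r \<noteq> 0\<close>] by (simp add: W_def)
  qed
qed

lemma sylvester_eq_0:
  fixes N K Z :: "complex^'n^'n"
  assumes "N ** Z = Z ** K" and "\<And>mu. invertible (K - mat mu) \<or> invertible (N - mat mu)"
  shows "Z = 0"
  using exists_annihilating_poly[of K] sylvester_poly_mat_eq_0[OF assms] by auto

section \<open>Hurwitz matrices\<close>

definition cvec :: "real^'n \<Rightarrow> complex^'n" where
  "cvec u = (\<chi> i. complex_of_real (u$i))"

lemma cvec_eq_0_iff [simp]: "cvec u = 0 \<longleftrightarrow> u = 0"
  by (simp add: cvec_def vec_eq_iff)

lemma cvec_scaleR: "cvec (c *\<^sub>R u) = complex_of_real c *s cvec u"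
  by (simp add: cvec_def vec_eq_iff)

lemma cmat_matrix_vector_mult: "cmat M *v cvec u = cvec (M *v u)"
  by (simp add: cmat_def cvec_def matrix_vector_mult_def vec_eq_iff)

lemma cmat_mult: "cmat (A ** B) = cmat A ** cmat B"
  by (simp add: cmat_def matrix_matrix_mult_def vec_eq_iff)

lemma cmat_uminus: "cmat (- A) = - cmat A"
  by (simp add: cmat_def vec_eq_iff)

lemma cmat_transpose: "cmat (transpose A) = transpose (cmat A)"
  by (simp add: cmat_def transpose_def vec_eq_iff)

lemma cmat_eq_0_iff: "cmat A = 0 \<longleftrightarrow> A = 0"
  by (simp add: cmat_def vec_eq_iff)

lemma hurwitz_invertible_shift:
  assumes "hurwitz F" and "0 \<le> Re mu"
  shows "invertible (cmat F - mat mu)"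
  unfolding invertible_iff_trivial_kernel
proof (intro allI impI)
  fix x
  assume "(cmat F - mat mu) *v x = 0"
  then have "cmat F *v x = mu *s x"
    by (simp add: matrix_vector_mult_diff_rdistrib mat_matrix_vector_mult)
  with assms show "x = 0"
    unfolding hurwitz_def by force
qed

lemma hurwitz_transpose_invertible_shift:
  assumes "hurwitz F" and "0 \<le> Re mu"
  shows "invertible (transpose (cmat F) - mat mu)"
proof -
  have "transpose (cmat F) - mat mu = transpose (cmat F - mat mu)"
    by (simp add: transpose_diff)
  then show ?thesis
    using hurwitz_invertible_shift[OF assms] invertible_transpose_iff by metis
qed

lemma hurwitz_transpose_nonneg_eigenvector_eq_0:
  assumes "hurwitz F" and "transpose F *v u = mu *\<^sub>R u" and "0 \<le> mu"
  shows "u = 0"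
proof -
  have "(transpose (cmat F) - mat (complex_of_real mu)) *v cvec u = 0"
    using assms(2) cmat_matrix_vector_mult[of "transpose F" u]
    by (simp add: cmat_transpose cvec_scaleR matrix_vector_mult_diff_rdistrib
        mat_matrix_vector_mult del: transpose_matrix_vector)
  moreover have "invertible (transpose (cmat F) - mat (complex_of_real mu))"
    using hurwitz_transpose_invertible_shift[OF assms(1)] assms(3) by simp
  ultimately show ?thesis
    using cvec_eq_0_iff invertible_iff_trivial_kernel by blast
qed

(* The spectra of F and of - G\<^sup>T lie in opposite open half-planes. *)
lemma hurwitz_sylvester_eq_0:
  fixes F G Z :: "real^'n^'n"
  assumes "hurwitz F" and "hurwitz G" and "transpose G ** Z + Z ** F = 0"
  shows "Z = 0"
proof -
  have "(- transpose G) ** Z = Z ** F"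
    using assms(3) by (metis matrix_uminus_mult eq_neg_iff_add_eq_0 add.commute)
  then have "(- transpose (cmat G)) ** cmat Z = cmat Z ** cmat F"
    by (metis cmat_mult cmat_uminus cmat_transpose)
  moreover have "invertible (cmat F - mat mu) \<or> invertible (- transpose (cmat G) - mat mu)"
    for mu
  proof (cases "0 \<le> Re mu")
    case True
    then show ?thesis
      using hurwitz_invertible_shift[OF assms(1)] by blast
  next
    case False
    then have "invertible (transpose (cmat G) - mat (- mu))"
      using hurwitz_transpose_invertible_shift[OF assms(2)] by simp
    then have "invertible (- (transpose (cmat G) - mat (- mu)))"
      by (rule invertible_uminus)
    moreover have "- (transpose (cmat G) - mat (- mu)) = - transpose (cmat G) - mat mu"
      by (simp add: mat_uminus)
    ultimately show ?thesis
      by metis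
  qed
  ultimately have "cmat Z = 0"
    by (rule sylvester_eq_0)
  then show ?thesis
    by (simp add: cmat_eq_0_iff)
qed

(* A form of Brauer's theorem. *)
lemma rank_one_update_eigenvalue:
  fixes F :: "'a::field^'n^'n" and x w z :: "'a^'n"
  assumes Fx: "F *v x = lam *s x" and wx: "(\<Sum>j\<in>UNIV. w$j * x$j) = 1"
    and "z \<noteq> 0" and ev: "F *v z + (c * (\<Sum>j\<in>UNIV. w$j * z$j)) *s x = l *s z"
  shows "l = lam + c \<or> (\<exists>u. u \<noteq> 0 \<and> F *v u = l *s u)"
proof (cases "l = lam")
  case True
  have "x \<noteq> 0"
    using wx by auto
  with Fx True show ?thesis
    by blast
next
  case False
  define s where "s = (\<Sum>j\<in>UNIV. w$j * z$j)"
  define a where "a = c * s / (l - lam)"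
  define u where "u = z - a *s x"
  have Fz: "F *v z = l *s z - (c * s) *s x"
    using ev by (simp add: s_def eq_diff_eq)
  have key: "c * s + a * lam = l * a"
    using False by (simp add: a_def field_simps)
  have "(F *v u) $ i = (l *s u) $ i" for i
  proof -
    have "(F *v u) $ i = l * z $ i - (c * s + a * lam) * x $ i"
      unfolding u_def
      by (simp add: matrix_vector_mult_diff_distrib matrix_vector_mult_smult Fz Fx algebra_simps)
    also have "\<dots> = (l *s u) $ i"
      unfolding key by (simp add: u_def algebra_simps)
    finally show ?thesis .
  qed
  then have Fu: "F *v u = l *s u"
    by (simp add: vec_eq_iff)
  show ?thesis
  proof (cases "u = 0")
    case False
    with Fu show ?thesis
      by blast
  next
    case True
    then have z: "z = a *s x"
      by (simp add: u_def)
    then have "s = a"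
      using wx by (simp add: s_def mult.left_commute flip: sum_distrib_left)
    then have "((lam + c) * a) *s x = F *v z + (c * s) *s x"
      by (simp add: z matrix_vector_mult_smult Fx vector_smult_assoc vector_sadd_rdistrib
          algebra_simps)
    also have "\<dots> = l *s z"
      using ev by (simp add: s_def)
    also have "\<dots> = (l * a) *s x"
      by (simp add: z vector_smult_assoc)
    finally have "((lam + c) * a) *s x = (l * a) *s x" .
    moreover have "a \<noteq> 0" "x \<noteq> 0"
      using \<open>z \<noteq> 0\<close> z by auto
    ultimately have "l = lam + c"
      by simp
    then show ?thesis
      by blast
  qed
qed

lemma hurwitz_rank_one_update:
  fixes F :: "real^'n^'n"
  assumes "hurwitz F" and "F *v x = lam *\<^sub>R x" and "w \<bullet> x = 1" and "lam + c < 0"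
  shows "hurwitz (F + c *\<^sub>R outer x w)"
  unfolding hurwitz_def
proof (intro allI impI, elim conjE)
  fix l :: complex and z :: "complex^'n"
  assume "z \<noteq> 0" and ev: "cmat (F + c *\<^sub>R outer x w) *v z = l *s z"
  have "cmat F *v cvec x = complex_of_real lam *s cvec x"
    using assms(2) by (simp add: cmat_matrix_vector_mult cvec_scaleR)
  moreover have "(\<Sum>j\<in>UNIV. cvec w $ j * cvec x $ j) = 1"
    using assms(3) by (simp add: cvec_def inner_vec_def flip: of_real_mult of_real_sum)
  moreover have "cmat F *v z + (complex_of_real c * (\<Sum>j\<in>UNIV. cvec w $ j * z $ j)) *s cvec x
      = l *s z"
    using ev by (simp add: cmat_def cvec_def matrix_vector_mult_def outer_def vec_eq_iff
        sum.distrib sum_distrib_left algebra_simps)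
  ultimately have "l = complex_of_real (lam + c) \<or> (\<exists>u. u \<noteq> 0 \<and> cmat F *v u = l *s u)"
    using rank_one_update_eigenvalue \<open>z \<noteq> 0\<close> by fastforce
  then show "Re l < 0"
    using assms(1,4) unfolding hurwitz_def by auto
qed

section \<open>Stabilizing solutions of the Riccati equation\<close>

lemma are_residual_diff:
  "are_residual A Q D X - are_residual A Q D Y
     = (transpose A - Y ** D) ** (X - Y) + (X - Y) ** (A - D ** X)"
  unfolding are_residual_def by (simp add: matrix_ring_simps algebra_simps)

lemma transpose_are_residual:
  assumes "symmetric_mat Q" and "symmetric_mat D"
  shows "transpose (are_residual A Q D X) = are_residual A Q D (transpose X)"
  using assms unfolding are_residual_def symmetric_mat_def
  by (simp add: matrix_ring_simps algebra_simps)

lemma stabilizing_solution_symmetric: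
  assumes "symmetric_mat Q" and "symmetric_mat D" and "stabilizing_solution A Q D X"
  shows "symmetric_mat X"
proof -
  have "are_residual A Q D X - are_residual A Q D (transpose X) = 0"
    using assms transpose_are_residual[OF assms(1,2), of A X]
    by (simp add: stabilizing_solution_def)
  then have "transpose (A - D ** X) ** (X - transpose X) + (X - transpose X) ** (A - D ** X) = 0"
    using assms(2) unfolding are_residual_diff symmetric_mat_def
    by (simp add: matrix_ring_simps)
  then have "X - transpose X = 0"
    using assms(3) hurwitz_sylvester_eq_0 unfolding stabilizing_solution_def by blast
  then show ?thesis
    by (simp add: symmetric_mat_def)
qed

lemma stabilizing_solution_unique:
  assumes "symmetric_mat Q" and "symmetric_mat D"
    and "stabilizing_solution A Q D X" and "stabilizing_solution A Q D Y"
  shows "X = Y"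
proof -
  have "transpose Y = Y"
    using stabilizing_solution_symmetric[OF assms(1,2,4)] by (simp add: symmetric_mat_def)
  then have "transpose (A - D ** Y) ** (X - Y) + (X - Y) ** (A - D ** X) = 0"
    using assms(2-4) are_residual_diff[of A Q D X Y]
    by (simp add: stabilizing_solution_def symmetric_mat_def matrix_ring_simps)
  then have "X - Y = 0"
    using assms(3,4) hurwitz_sylvester_eq_0 unfolding stabilizing_solution_def by blast
  then show ?thesis
    by simp
qed

section \<open>The shifted Hamiltonian\<close>

definition upper_half :: "'a^('n+'n) \<Rightarrow> 'a^'n" where
  "upper_half v = (\<chi> i. v $ Inl i)"

definition lower_half :: "'a^('n+'n) \<Rightarrow> 'a^'n" where
  "lower_half v = (\<chi> i. v $ Inr i)"

lemma sum_UNIV_Plus: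
  "(\<Sum>j\<in>UNIV. f j) = (\<Sum>i\<in>UNIV. f (Inl i)) + (\<Sum>i\<in>UNIV. f (Inr i))"
  for f :: "'a::finite + 'b::finite \<Rightarrow> 'c::comm_monoid_add"
  using sum.Plus[of "UNIV::'a set" "UNIV::'b set" f] by (simp add: comp_def)

lemma inner_upper_lower_half:
  "v \<bullet> w = upper_half v \<bullet> upper_half w + lower_half v \<bullet> lower_half w"
  for v w :: "real^('n::finite+'n)"
  by (simp add: inner_vec_def sum_UNIV_Plus upper_half_def lower_half_def)

lemma upper_half_hamiltonian_mult:
  "upper_half (hamiltonian A Q D *v v) = A *v upper_half v - D *v lower_half v"
  by (simp add: vec_eq_iff upper_half_def lower_half_def hamiltonian_def block_mat_def
      matrix_vector_mult_def sum_UNIV_Plus sum_subtractf sum_negf)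

lemma lower_half_hamiltonian_mult:
  "lower_half (hamiltonian A Q D *v v) = - (Q *v upper_half v) - transpose A *v lower_half v"
  by (simp add: vec_eq_iff upper_half_def lower_half_def hamiltonian_def block_mat_def
      matrix_vector_mult_def sum_UNIV_Plus transpose_def sum_negf)

lemma hamiltonian_eigenvector_halves:
  assumes "hamiltonian A Q D *v v = lam *s v"
  shows "A *v upper_half v - D *v lower_half v = lam *\<^sub>R upper_half v"
    and "- (Q *v upper_half v) - transpose A *v lower_half v = lam *\<^sub>R lower_half v"
  using assms upper_half_hamiltonian_mult[of A Q D v] lower_half_hamiltonian_mult[of A Q D v]
  by (simp_all add: upper_half_def lower_half_def vec_eq_iff del: transpose_matrix_vector)

lemma hamiltonian_eigenvector_graph:
  assumes "symmetric_mat Q" and "symmetric_mat D" and stab: "stabilizing_solution A Q D P"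
    and upper: "A *v x - D *v y = lam *\<^sub>R x"
    and lower: "- (Q *v x) - transpose A *v y = lam *\<^sub>R y"
    and "lam \<le> 0"
  shows "y = P *v x"
proof -
  have tP: "transpose P = P" and tD: "transpose D = D"
    using assms(1,2) stabilizing_solution_symmetric[OF assms(1,2) stab]
    by (simp_all add: symmetric_mat_def)
  have "(transpose A ** P + P ** A + Q - P ** D ** P) *v x = 0"
    using stab by (simp add: stabilizing_solution_def are_residual_def)
  then have riccati: "transpose A *v (P *v x) = P *v (D *v (P *v x)) - P *v (A *v x) - Q *v x"
    by (simp add: matrix_vector_mult_add_rdistrib matrix_vector_mult_diff_rdistrib
        matrix_vector_mul_assoc[symmetric] algebra_simps)
  define u where "u = y - P *v x"
  have "transpose (A - D ** P) *v u
      = transpose A *v y - transpose A *v (P *v x) - P *v (D *v y) + P *v (D *v (P *v x))"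
    unfolding u_def
    by (simp add: transpose_diff matrix_transpose_mul tP tD matrix_vector_mult_diff_rdistrib
        matrix_vector_mult_diff_distrib matrix_vector_mul_assoc[symmetric] algebra_simps
        del: transpose_matrix_vector)
  also have "\<dots> = (- lam) *\<^sub>R u"
  proof -
    have Dy: "D *v y = A *v x - lam *\<^sub>R x" and Aty: "transpose A *v y = - (Q *v x) - lam *\<^sub>R y"
      using upper lower by (simp_all add: algebra_simps)
    show ?thesis
      unfolding riccati u_def Dy Aty
      by (simp add: matrix_vector_mult_diff_distrib matrix_vector_mult_scaleR algebra_simps
          del: transpose_matrix_vector)
  qed
  finally have "u = 0"
    using hurwitz_transpose_nonneg_eigenvector_eq_0[of "A - D ** P" u "- lam"] stab \<open>lam \<le> 0\<close>
    unfolding stabilizing_solution_def by linarith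
  then show ?thesis
    by (simp add: u_def)
qed

(* With v = (x, y), p = (J + I) v = (x + y, y - x) and q = J v = (y, - x), the blocks of
   v p\<^sup>T - q q\<^sup>T yield these updates of A, Q and D. *)
definition shift_A :: "real^'n^'n \<Rightarrow> real^'n \<Rightarrow> real^'n \<Rightarrow> real \<Rightarrow> real^'n^'n" where
  "shift_A A x y c = A + c *\<^sub>R (outer x x + outer x y - outer y y)"

definition shift_Q :: "real^'n^'n \<Rightarrow> real^'n \<Rightarrow> real^'n \<Rightarrow> real \<Rightarrow> real^'n^'n" where
  "shift_Q Q x y c = Q - c *\<^sub>R (outer y y + outer y x + outer x y)"

definition shift_D :: "real^'n^'n \<Rightarrow> real^'n \<Rightarrow> real^'n \<Rightarrow> real \<Rightarrow> real^'n^'n" where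
  "shift_D D x y c = D - c *\<^sub>R (outer x y + outer y x - outer x x)"

lemma symmetric_mat_shift_Q: "symmetric_mat Q \<Longrightarrow> symmetric_mat (shift_Q Q x y c)"
  by (simp add: symmetric_mat_def shift_Q_def transpose_diff transpose_add transpose_scalar
      transpose_outer algebra_simps)

lemma symmetric_mat_shift_D: "symmetric_mat D \<Longrightarrow> symmetric_mat (shift_D D x y c)"
  by (simp add: symmetric_mat_def shift_D_def transpose_diff transpose_add transpose_scalar
      transpose_outer algebra_simps)

lemma hamiltonian_rank_two_update:
  fixes v :: "real^('n::finite+'n)"
  defines "x \<equiv> upper_half v" and "y \<equiv> lower_half v"
  shows "hamiltonian A Q D
      + c *\<^sub>R (outer v ((Jmat + mat 1) *v v) - outer (Jmat *v v) (Jmat *v v))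
    = hamiltonian (shift_A A x y c) (shift_Q Q x y c) (shift_D D x y c)"
proof -
  have vx: "v $ Inl a = x $ a" and vy: "v $ Inr a = y $ a" for a
    by (simp_all add: x_def y_def upper_half_def lower_half_def)
  have "(Jmat *v v) $ i = (case i of Inl a \<Rightarrow> y $ a | Inr a \<Rightarrow> - x $ a)" for i
    by (cases i) (simp_all add: Jmat_def block_mat_def matrix_vector_mult_def sum_UNIV_Plus
        mat_def vx vy if_distrib if_distribR cong: if_cong)
  then have Jv: "Jmat *v v = (\<chi> i. case i of Inl a \<Rightarrow> y $ a | Inr a \<Rightarrow> - x $ a)"
    by (simp add: vec_eq_iff)
  show ?thesis
    unfolding vec_eq_iff[of "_ :: real^('n+'n)^('n+'n)"] vec_eq_iff[of "_ :: real^('n+'n)"]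
  proof (intro allI)
    fix i j :: "'n + 'n"
    show "(hamiltonian A Q D
        + c *\<^sub>R (outer v ((Jmat + mat 1) *v v) - outer (Jmat *v v) (Jmat *v v))) $ i $ j
      = hamiltonian (shift_A A x y c) (shift_Q Q x y c) (shift_D D x y c) $ i $ j"
      unfolding matrix_vector_mult_add_rdistrib matrix_vector_mul_lid Jv
      by (cases i; cases j) (simp_all add: hamiltonian_def block_mat_def outer_def shift_A_def
          shift_Q_def shift_D_def transpose_def vx vy algebra_simps)
  qed
qed

lemma shift_closed_loop:
  assumes "symmetric_mat P" and "y = P *v x"
  shows "shift_A A x y c - shift_D D x y c ** P = A - D ** P + c *\<^sub>R outer x (x + P *v y)"
  using assms unfolding shift_A_def shift_D_def symmetric_mat_def
  by (simp add: matrix_ring_simps scalar_matrix_assoc[symmetric] outer_matrix_mult outer_add_right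
      algebra_simps del: transpose_matrix_vector)

lemma are_residual_shift:
  assumes "symmetric_mat P" and "y = P *v x"
  shows "are_residual (shift_A A x y c) (shift_Q Q x y c) (shift_D D x y c) P = are_residual A Q D P"
  using assms unfolding shift_A_def shift_Q_def shift_D_def are_residual_def symmetric_mat_def
  by (simp add: matrix_ring_simps transpose_scalar transpose_outer matrix_scalar_ac
      scalar_matrix_assoc[symmetric] outer_matrix_mult matrix_mult_outer outer_add_left
      outer_add_right outer_scaleR_left algebra_simps
      flip: scaleR_matrix_vector_assoc del: transpose_matrix_vector)

lemma stabilizing_solution_shift:
  assumes "symmetric_mat Q" and "symmetric_mat D" and stab: "stabilizing_solution A Q D P"
    and y: "y = P *v x" and Fx: "(A - D ** P) *v x = lam *\<^sub>R x"
    and wx: "(x + P *v y) \<bullet> x = 1" and "lam + c < 0"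
  shows "stabilizing_solution (shift_A A x y c) (shift_Q Q x y c) (shift_D D x y c) P"
proof -
  have sP: "symmetric_mat P"
    using stabilizing_solution_symmetric assms(1,2) stab .
  have "hurwitz (A - D ** P + c *\<^sub>R outer x (x + P *v y))"
    using stab hurwitz_rank_one_update[OF _ Fx wx \<open>lam + c < 0\<close>]
    by (simp add: stabilizing_solution_def)
  with stab show ?thesis
    by (simp add: stabilizing_solution_def are_residual_shift[OF sP y] shift_closed_loop[OF sP y])
qed

theorem theorem1:
  fixes A Q D P :: "real^'n^'n" and lam :: real and v :: "real^('n+'n)"
  assumes "symmetric_mat Q" and "symmetric_mat D"
    and "stabilizable A D" and "detectable Q A"
    and "stabilizing_solution A Q D P"
    and "hamiltonian A Q D *v v = lam *s v" and "lam < 0" and "norm v = 1"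
  shows "\<forall>dlam::real. \<exists>At Qt Dt :: real^'n^'n.
           symmetric_mat Qt \<and> symmetric_mat Dt \<and>
           hamiltonian A Q D
             + dlam *\<^sub>R (outer v ((Jmat + mat 1) *v v) - outer (Jmat *v v) (Jmat *v v))
             = hamiltonian At Qt Dt \<and>
           (dlam < - lam \<longrightarrow>
              stabilizing_solution At Qt Dt P \<and>
              (\<forall>X. stabilizing_solution At Qt Dt X \<longrightarrow> X = P))"
proof (intro allI exI conjI impI)
  \<comment> \<open>Stabilizability and detectability only guarantee that P exists; here P is given.\<close>
  fix dlam :: real
  define x y where "x = upper_half v" and "y = lower_half v"
  have sP: "symmetric_mat P"
    using stabilizing_solution_symmetric assms(1,2,5) .
  have y: "y = P *v x"
    using hamiltonian_eigenvector_graph[OF assms(1,2,5) hamiltonian_eigenvector_halves[OF assms(6)]]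
      \<open>lam < 0\<close> by (simp add: x_def y_def)
  have Fx: "(A - D ** P) *v x = lam *\<^sub>R x"
    using hamiltonian_eigenvector_halves(1)[OF assms(6)] y
    by (simp add: x_def y_def matrix_vector_mult_diff_rdistrib matrix_vector_mul_assoc[symmetric])
  have "(P *v y) \<bullet> x = y \<bullet> (P *v x)"
    using sP unfolding symmetric_mat_def by (metis dot_lmul_matrix vector_transpose_matrix)
  then have wx: "(x + P *v y) \<bullet> x = 1"
    using \<open>norm v = 1\<close> inner_upper_lower_half[of v v, folded x_def y_def]
    by (simp add: inner_add_left y norm_eq_1)
  show "symmetric_mat (shift_Q Q x y dlam)" "symmetric_mat (shift_D D x y dlam)"
    using assms(1,2) by (simp_all add: symmetric_mat_shift_Q symmetric_mat_shift_D)
  show "hamiltonian A Q D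
      + dlam *\<^sub>R (outer v ((Jmat + mat 1) *v v) - outer (Jmat *v v) (Jmat *v v))
    = hamiltonian (shift_A A x y dlam) (shift_Q Q x y dlam) (shift_D D x y dlam)"
    unfolding x_def y_def by (rule hamiltonian_rank_two_update)
  assume "dlam < - lam"
  then show stab: "stabilizing_solution (shift_A A x y dlam) (shift_Q Q x y dlam) (shift_D D x y dlam) P"
    using stabilizing_solution_shift[OF assms(1,2,5) y Fx wx] by simp
  fix X
  assume "stabilizing_solution (shift_A A x y dlam) (shift_Q Q x y dlam) (shift_D D x y dlam) X"
  then show "X = P"
    using stabilizing_solution_unique symmetric_mat_shift_Q symmetric_mat_shift_D assms(1,2) stab
    by blast
qed

end
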